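(* If a closed convex cone $K$ in a finite-dimensional real Euclidean space $\mathbb{E}$ is strongly tangentially exposed, then $K$ is facially dual complete.
   Context: $\mathbb{E}$ is identified with its dual. Tangent cone: $\mathcal{T}(x;C)=\operatorname{cl}\{d: x+\epsilon d\in C\text{ for some }\epsilon>0\}$ for closed convex $C$ and $x\in C$. A face of a closed convex set $C$ is a closed convex $F\subseteq C$ such that $x\in F$, $y,z\in C$, $x\in(y,z)$ imply $y,z\in F$. A closed convex cone $K$ is tangentially exposed if $\mathcal{T}(x;K)\cap\operatorname{span}F=\mathcal{T}(x;F)$ for every face $F\neq K$ of $K$ and every $x\in F$. For a family $\mathcal{K}$ of closed convex sets, $\mathcal{T}(\mathcal{K})$ is the set of all $\mathcal{T}(x;C)$ with $C\in\mathcal{K}$, $x\in C$; $\mathcal{T}^0(\mathcal{K})=\mathcal{K}$, $\mathcal{T}^k(\mathcal{K})=\mathcal{T}(\mathcal{T}^{k-1}(\mathcal{K}))$. The lexicographic tangent cones of $C$ are the elements of $\mathcal{T}^k(\{C\})$, $k\ge1$. A closed convex set is strongly tangentially exposed if it and all of its lexicographic tangent cones are tangentially exposed. $K^*=\{s:\langle s,x\rangle\ge0\ \forall x\in K\}$, $F^\perp=\{s:\langle s,x\rangle=0\ \forall x\in F\}$; $K$ is facially dual complete (FDC) if $K^*+F^\perp$ is closed for every nonempty face $F\neq K$. *)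

theory Defs
  imports "HOL-Analysis.Analysis"
begin

definition tangent_cone :: "'a::euclidean_space \<Rightarrow> 'a set \<Rightarrow> 'a set" where
  "tangent_cone x C = closure {d. \<exists>\<epsilon>>0. x + \<epsilon> *\<^sub>R d \<in> C}"

definition is_face :: "'a::euclidean_space set \<Rightarrow> 'a set \<Rightarrow> bool" where
  "is_face F C \<longleftrightarrow> closed F \<and> convex F \<and> F \<subseteq> C \<and>
     (\<forall>x\<in>F. \<forall>y\<in>C. \<forall>z\<in>C. x \<in> open_segment y z \<longrightarrow> y \<in> F \<and> z \<in> F)"

definition tangentially_exposed :: "'a::euclidean_space set \<Rightarrow> bool" where
  "tangentially_exposed K \<longleftrightarrow>
     (\<forall>F. is_face F K \<and> F \<noteq> K \<longrightarrow> (\<forall>x\<in>F. tangent_cone x K \<inter> span F = tangent_cone x F))"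

definition tangent_family :: "'a::euclidean_space set set \<Rightarrow> 'a set set" where
  "tangent_family \<K> = {tangent_cone x C | x C. C \<in> \<K> \<and> x \<in> C}"

definition lex_tangent_cones :: "'a::euclidean_space set \<Rightarrow> 'a set set" where
  "lex_tangent_cones C = (\<Union>k\<in>{1..}. (tangent_family ^^ k) {C})"

definition strongly_tangentially_exposed :: "'a::euclidean_space set \<Rightarrow> bool" where
  "strongly_tangentially_exposed C \<longleftrightarrow>
     tangentially_exposed C \<and> (\<forall>D\<in>lex_tangent_cones C. tangentially_exposed D)"

definition dual_cone :: "'a::euclidean_space set \<Rightarrow> 'a set" where
  "dual_cone K = {s. \<forall>x\<in>K. s \<bullet> x \<ge> 0}"

definition perp :: "'a::euclidean_space set \<Rightarrow> 'a set" where
  "perp F = {s. \<forall>x\<in>F. s \<bullet> x = 0}"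

definition facially_dual_complete :: "'a::euclidean_space set \<Rightarrow> bool" where
  "facially_dual_complete K \<longleftrightarrow>
     (\<forall>F. is_face F K \<and> F \<noteq> {} \<and> F \<noteq> K \<longrightarrow>
        closed {s + t | s t. s \<in> dual_cone K \<and> t \<in> perp F})"

end

theory Submission
  imports Defs
begin

text \<open>The inclusion \<open>K\<^sup>* + F\<^sup>\<bottom> \<subseteq> F\<^sup>*\<close> always holds and is dense, so facial dual completeness
  amounts to \<open>F\<^sup>* \<subseteq> K\<^sup>* + F\<^sup>\<bottom>\<close>. Relative interior points of \<open>F\<^sup>*\<close> are caught by density.
  A relative boundary point \<open>s\<close> of \<open>F\<^sup>*\<close> is annihilated by some \<open>a \<in> F\<close> with \<open>-a \<notin> K\<close>; the tangent
  cone \<open>T = T(a;K)\<close> then has a strictly larger lineality space, tangential exposedness gives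
  \<open>T \<inter> span F = T(a;F)\<close>, and a Slater-type duality argument yields \<open>s \<in> H\<^sup>* + F\<^sup>\<bottom>\<close> for the
  smallest face \<open>H\<close> of \<open>T\<close> meeting \<open>T(a;F)\<close> in its relative interior. As \<open>T\<^sup>* \<subseteq> K\<^sup>*\<close> and \<open>T\<close> is
  again strongly tangentially exposed, induction on the codimension of the lineality space
  finishes the proof.\<close>

lemma is_face_iff_closed_face_of: "is_face F C \<longleftrightarrow> closed F \<and> F face_of C"
  unfolding is_face_def face_of_def by blast

lemma convex_cone_add: "convex K \<Longrightarrow> cone K \<Longrightarrow> x \<in> K \<Longrightarrow> y \<in> K \<Longrightarrow> x + y \<in> K"
  using convex_cone by blast

lemma face_of_cone_contains_0:
  fixes K :: "'a::euclidean_space set"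
  assumes "cone K" "F face_of K" "F \<noteq> {}"
  shows "0 \<in> F"
proof -
  obtain x where x: "x \<in> F" using assms by auto
  show ?thesis
  proof (cases "x = 0")
    case True
    then show ?thesis using x by simp
  next
    case False
    have xK: "x \<in> K" using x assms face_of_imp_subset by blast
    have "0 \<in> K" "2 *\<^sub>R x \<in> K" using assms(1) xK cone_contains_0 mem_cone[of K x 2] by auto
    moreover have "x \<in> open_segment 0 (2 *\<^sub>R x)" using False
      by (auto simp: in_segment intro!: exI[of _ "1/2"])
    ultimately show ?thesis using assms(2) x unfolding face_of_def by blast
  qed
qed

lemma face_of_cone_imp_cone:
  fixes K :: "'a::euclidean_space set"
  assumes "cone K" "F face_of K" "F \<noteq> {}"
  shows "cone F"
  unfolding cone_def
proof (intro ballI allI impI)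
  fix x and c :: real
  assume x: "x \<in> F" and c: "0 \<le> c"
  have F0: "0 \<in> F" using face_of_cone_contains_0 assms by blast
  show "c *\<^sub>R x \<in> F"
  proof (cases "c \<le> 1 \<or> x = 0")
    case True
    then show ?thesis
      using convexD[OF face_of_imp_convex[OF assms(2)] F0 x, of "1 - c" c] c F0 by auto
  next
    case False
    have xK: "x \<in> K" using x assms face_of_imp_subset by blast
    have "0 \<in> K" "c *\<^sub>R x \<in> K" using assms(1) xK cone_contains_0 mem_cone c by auto
    moreover have "x \<in> open_segment 0 (c *\<^sub>R x)" using False
      by (auto simp: in_segment intro!: exI[of _ "1/c"])
    ultimately show ?thesis using assms(2) x unfolding face_of_def by blast
  qed
qed

lemma face_of_cone_contains_lines:
  fixes K :: "'a::euclidean_space set"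
  assumes "cone K" "F face_of K" "F \<noteq> {}" "l \<in> K" "-l \<in> K"
  shows "l \<in> F"
proof (cases "l = 0")
  case True
  then show ?thesis using face_of_cone_contains_0 assms by blast
next
  case False
  then have "l \<noteq> -l" by (simp add: eq_neg_iff_add_eq_0 flip: scaleR_2)
  then have "0 \<in> open_segment l (-l)"
    by (auto simp: in_segment intro!: exI[of _ "1/2"])
  then show ?thesis
    using assms face_of_cone_contains_0[OF assms(1-3)] unfolding face_of_def by blast
qed

lemma span_convex_cone_eq_differences:
  fixes F :: "'a::euclidean_space set"
  assumes "convex F" "cone F" "F \<noteq> {}" "y \<in> span F"
  obtains a b where "a \<in> F" "b \<in> F" "y = a - b"
proof -
  let ?D = "{a - b | a b. a \<in> F \<and> b \<in> F}"
  have F0: "0 \<in> F" using assms cone_contains_0 by blast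
  have add: "x + y \<in> F" if "x \<in> F" "y \<in> F" for x y using assms convex_cone_add that by blast
  have scale: "c *\<^sub>R x \<in> F" if "x \<in> F" "0 \<le> c" for x c using assms mem_cone that by blast
  have "subspace ?D"
    unfolding subspace_def
  proof (intro conjI ballI allI)
    show "0 \<in> ?D" using F0 by force
  next
    fix x y assume "x \<in> ?D" "y \<in> ?D"
    then obtain a b c d where "a \<in> F" "b \<in> F" "c \<in> F" "d \<in> F" "x = a - b" "y = c - d" by blast
    then have "x + y = (a + c) - (b + d)" "a + c \<in> F" "b + d \<in> F" using add by (auto simp: algebra_simps)
    then show "x + y \<in> ?D" by blast
  next
    fix c :: real and x assume "x \<in> ?D"
    then obtain a b where ab: "a \<in> F" "b \<in> F" "x = a - b" by blast
    consider "0 \<le> c" | "0 \<le> -c" by linarith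
    then show "c *\<^sub>R x \<in> ?D"
    proof cases
      case 1
      have "c *\<^sub>R x = c *\<^sub>R a - c *\<^sub>R b" using ab by (simp add: scaleR_diff_right)
      with 1 ab scale show ?thesis by blast
    next
      case 2
      have "c *\<^sub>R x = (-c) *\<^sub>R b - (-c) *\<^sub>R a" using ab by (simp add: scaleR_diff_right)
      with 2 ab scale show ?thesis by blast
    qed
  qed
  moreover have "F \<subseteq> ?D" using F0 by force
  ultimately have "span F \<subseteq> ?D" using span_minimal by blast
  then show ?thesis using assms(4) that by blast
qed

lemma face_of_cone_Int_span:
  fixes K :: "'a::euclidean_space set"
  assumes "cone K" "F face_of K" "F \<noteq> {}"
  shows "K \<inter> span F = F"
proof (intro equalityI subsetI)
  fix y assume y: "y \<in> K \<inter> span F"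
  have cF: "convex F" "cone F"
    using face_of_imp_convex[OF assms(2)] face_of_cone_imp_cone[OF assms] by auto
  obtain a b where ab: "a \<in> F" "b \<in> F" "y = a - b"
    using span_convex_cone_eq_differences[OF cF assms(3)] y by blast
  show "y \<in> F"
  proof (cases "y = b")
    case True
    then show ?thesis using ab by simp
  next
    case False
    have "(1/2) *\<^sub>R a = (1 - 1/2) *\<^sub>R y + (1/2) *\<^sub>R b" using ab by (simp add: scaleR_diff_right)
    then have "(1/2) *\<^sub>R a \<in> open_segment y b" using False unfolding in_segment
      by (intro conjI exI[of _ "1/2"]) auto
    moreover have "(1/2) *\<^sub>R a \<in> F" using mem_cone[OF cF(2) ab(1), of "1/2"] by simp
    ultimately show ?thesis
      using assms(2) y ab face_of_imp_subset[OF assms(2)] unfolding face_of_def by blast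
  qed
next
  show "y \<in> K \<inter> span F" if "y \<in> F" for y
    using that face_of_imp_subset[OF assms(2)] span_base by blast
qed

lemma convex_dual_cone: "convex (dual_cone K)"
  unfolding dual_cone_def convex_def
  by (auto simp: inner_add_left intro!: add_nonneg_nonneg mult_nonneg_nonneg)

lemma closed_dual_cone: "closed (dual_cone K)"
proof -
  have "dual_cone K = (\<Inter>x\<in>K. {s. s \<bullet> x \<ge> 0})" unfolding dual_cone_def by blast
  moreover have "closed {s. s \<bullet> x \<ge> 0}" for x :: 'a
    using closed_halfspace_ge[of 0 x] by (simp add: inner_commute)
  ultimately show ?thesis by auto
qed

lemma dual_cone_antimono: "K \<subseteq> T \<Longrightarrow> dual_cone T \<subseteq> dual_cone K"
  unfolding dual_cone_def by blast

lemma subspace_perp: "subspace (perp S)"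
  unfolding subspace_def perp_def by (auto simp: inner_add_left)

lemma perp_antimono: "F \<subseteq> H \<Longrightarrow> perp H \<subseteq> perp F"
  unfolding perp_def by blast

lemma perp_span: "perp (span S) = perp S"
  unfolding perp_def by (metis (mono_tags, lifting) orthogonal_def orthogonal_to_span span_base inner_commute)

lemma inner_nonneg_if_bounded_below_on_rays:
  fixes a :: "'a::real_inner"
  assumes rays: "\<And>x c. x \<in> S \<Longrightarrow> 0 < c \<Longrightarrow> c *\<^sub>R x \<in> S"
    and bound: "\<And>x. x \<in> S \<Longrightarrow> b \<le> a \<bullet> x" and x: "x \<in> S"
  shows "0 \<le> a \<bullet> x"
proof (rule ccontr)
  assume "\<not> 0 \<le> a \<bullet> x"
  define c where "c = (\<bar>b\<bar> + 1) / - (a \<bullet> x)"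
  have "0 < c" using \<open>\<not> 0 \<le> a \<bullet> x\<close> unfolding c_def by (intro divide_pos_pos) auto
  moreover have "a \<bullet> (c *\<^sub>R x) = - (\<bar>b\<bar> + 1)" using \<open>\<not> 0 \<le> a \<bullet> x\<close> by (simp add: c_def)
  ultimately show False using bound[OF rays[OF x \<open>0 < c\<close>]] by linarith
qed

lemma inner_eq_0_if_bounded_below_on_subspace:
  fixes a :: "'a::real_inner"
  assumes "subspace S" "\<And>x. x \<in> S \<Longrightarrow> b \<le> a \<bullet> x" "x \<in> S"
  shows "a \<bullet> x = 0"
proof -
  have rays: "\<And>x c. x \<in> S \<Longrightarrow> 0 < c \<Longrightarrow> c *\<^sub>R x \<in> S" using assms(1) subspace_scale by blast
  have "0 \<le> a \<bullet> x" "0 \<le> a \<bullet> (-x)"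
    using inner_nonneg_if_bounded_below_on_rays[OF rays assms(2)] assms(1,3) subspace_neg by blast+
  then show ?thesis by simp
qed

lemma mem_closed_convex_cone_if_dual_nonneg:
  fixes C :: "'a::euclidean_space set"
  assumes "closed C" "convex C" "cone C" "C \<noteq> {}" "\<And>a. a \<in> dual_cone C \<Longrightarrow> 0 \<le> a \<bullet> y"
  shows "y \<in> C"
proof (rule ccontr)
  assume "y \<notin> C"
  then obtain a b where ab: "a \<bullet> y < b" "\<forall>x\<in>C. a \<bullet> x > b"
    using separating_hyperplane_closed_point assms by blast
  have "0 \<in> C" using assms cone_contains_0 by blast
  then have "b < 0" using ab by force
  have "0 \<le> a \<bullet> x" if "x \<in> C" for x
    using inner_nonneg_if_bounded_below_on_rays[of C b a x] ab(2) that assms(3)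
    by (meson less_imp_le mem_cone)
  then have "a \<in> dual_cone C" unfolding dual_cone_def by blast
  then show False using assms(5) ab \<open>b < 0\<close> by fastforce
qed

lemma mem_span_if_orthogonal_to_perp:
  fixes S :: "'a::euclidean_space set"
  assumes "\<And>p. p \<in> perp S \<Longrightarrow> y \<bullet> p = 0"
  shows "y \<in> span S"
proof -
  obtain u z where u: "u \<in> span S" and z: "\<And>w. w \<in> span S \<Longrightarrow> orthogonal z w" and y: "y = u + z"
    using orthogonal_subspace_decomp_exists by metis
  have "z \<in> perp S" unfolding perp_def using z span_base orthogonal_def by blast
  then have "y \<bullet> z = 0" "u \<bullet> z = 0"
    using assms[of z] z[OF u] by (auto simp: orthogonal_def inner_commute)
  then have "z \<bullet> z = 0" using y by (simp add: inner_add_left)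
  then show ?thesis using u y by simp
qed

lemma set_plus_absorb_subspace:
  assumes "subspace S" "0 \<in> T" "T \<subseteq> S"
  shows "T + S = S"
proof
  show "T + S \<subseteq> S" using assms(1,3) subspace_add by (blast elim: set_plus_elim)
  show "S \<subseteq> T + S" using set_plus_intro[OF assms(2)] by fastforce
qed

lemma dual_cone_plus_perp_subset:
  assumes "F \<subseteq> K"
  shows "dual_cone K + perp F \<subseteq> dual_cone F"
proof
  fix x assume "x \<in> dual_cone K + perp F"
  then obtain k p where "x = k + p" "k \<in> dual_cone K" "p \<in> perp F" by (rule set_plus_elim)
  then show "x \<in> dual_cone F"
    using assms unfolding dual_cone_def perp_def by (auto simp: inner_add_left)
qed

lemma convex_dual_cone_plus_perp: "convex (dual_cone K + perp S)"
  by (simp add: convex_set_plus convex_dual_cone subspace_imp_convex subspace_perp)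

lemma cone_dual_cone_plus_perp: "cone (dual_cone K + perp S)"
  unfolding cone_def
proof (intro ballI allI impI)
  fix x and c :: real assume "x \<in> dual_cone K + perp S" "0 \<le> c"
  obtain k p where "x = k + p" "k \<in> dual_cone K" "p \<in> perp S"
    using \<open>x \<in> dual_cone K + perp S\<close> by (rule set_plus_elim)
  moreover have "c *\<^sub>R k \<in> dual_cone K" "c *\<^sub>R p \<in> perp S"
    using calculation \<open>0 \<le> c\<close> by (auto simp: dual_cone_def perp_def)
  ultimately show "c *\<^sub>R x \<in> dual_cone K + perp S" by (simp add: scaleR_add_right set_plus_intro)
qed

lemma dual_cone_Int_span_subset_closure:
  fixes K :: "'a::euclidean_space set"
  assumes "closed K" "convex K" "cone K" "K \<noteq> {}"
  shows "dual_cone (K \<inter> span S) \<subseteq> closure (dual_cone K + perp S)"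
proof
  fix y assume y: "y \<in> dual_cone (K \<inter> span S)"
  let ?C = "dual_cone K + perp S"
  show "y \<in> closure ?C"
  proof (rule ccontr)
    assume "y \<notin> closure ?C"
    then obtain a b where ab: "a \<bullet> y < b" "\<forall>x\<in>closure ?C. a \<bullet> x > b"
      using separating_hyperplane_closed_point[OF convex_closure[OF convex_dual_cone_plus_perp]]
      by blast
    have bound: "b \<le> a \<bullet> x" if "x \<in> ?C" for x using ab(2) closure_subset that by fastforce
    have rays: "c *\<^sub>R x \<in> ?C" if "x \<in> ?C" "0 < c" for x and c :: real
      using mem_cone[OF cone_dual_cone_plus_perp that(1)] that(2) by simp
    have pos: "0 \<le> a \<bullet> x" if "x \<in> ?C" for x
      using inner_nonneg_if_bounded_below_on_rays[OF rays bound that] .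
    have K0: "0 \<in> dual_cone K" and S0: "0 \<in> perp S" by (simp_all add: dual_cone_def perp_def)
    have "0 \<in> ?C" using set_plus_intro[OF K0 S0] by simp
    then have "b < 0" using ab(2) closure_subset by fastforce
    have "0 \<le> k \<bullet> a" if "k \<in> dual_cone K" for k
      using pos[OF set_plus_intro[OF that S0]] by (simp add: inner_commute)
    then have aK: "a \<in> K" using mem_closed_convex_cone_if_dual_nonneg[OF assms] by blast
    have "a \<bullet> p = 0" if "p \<in> perp S" for p
    proof (rule inner_eq_0_if_bounded_below_on_subspace[OF subspace_perp _ that])
      fix q assume "q \<in> perp S"
      then show "0 \<le> a \<bullet> q" using pos[OF set_plus_intro[OF K0]] by simp
    qed
    then have "a \<in> span S" by (rule mem_span_if_orthogonal_to_perp)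
    then have "0 \<le> y \<bullet> a" using y aK unfolding dual_cone_def by blast
    then show False using ab \<open>b < 0\<close> by (simp add: inner_commute)
  qed
qed

lemma closure_dual_cone_plus_perp_face:
  fixes K :: "'a::euclidean_space set"
  assumes "closed K" "convex K" "cone K" "F face_of K" "F \<noteq> {}"
  shows "closure (dual_cone K + perp F) = dual_cone F"
proof
  have "K \<noteq> {}" using assms(4,5) face_of_imp_subset by blast
  then have "dual_cone (K \<inter> span F) \<subseteq> closure (dual_cone K + perp F)"
    by (rule dual_cone_Int_span_subset_closure[OF assms(1-3)])
  then show "dual_cone F \<subseteq> closure (dual_cone K + perp F)"
    by (simp only: face_of_cone_Int_span[OF assms(3-5)])
  have "dual_cone K + perp F \<subseteq> dual_cone F"
    using dual_cone_plus_perp_subset face_of_imp_subset[OF assms(4)] .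
  then show "closure (dual_cone K + perp F) \<subseteq> dual_cone F"
    using closed_dual_cone by (rule closure_minimal)
qed

lemma rel_interior_dual_cone_face_subset:
  fixes K :: "'a::euclidean_space set"
  assumes "closed K" "convex K" "cone K" "F face_of K" "F \<noteq> {}"
  shows "rel_interior (dual_cone F) \<subseteq> dual_cone K + perp F"
proof -
  have "rel_interior (dual_cone F) = rel_interior (dual_cone K + perp F)"
    using convex_rel_interior_closure[OF convex_dual_cone_plus_perp, of K F]
    by (simp only: closure_dual_cone_plus_perp_face[OF assms])
  then show ?thesis using rel_interior_subset by blast
qed

lemma perp_if_inner_nonneg_vanishing_at_rel_interior:
  fixes H :: "'a::euclidean_space set"
  assumes "convex H" "z \<in> rel_interior H" "\<And>h. h \<in> H \<Longrightarrow> 0 \<le> a \<bullet> h" "a \<bullet> z = 0"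
  shows "a \<in> perp H"
  unfolding perp_def
proof (intro CollectI ballI)
  fix h assume h: "h \<in> H"
  text \<open>The segment from \<open>h\<close> through \<open>z\<close> can be prolonged inside \<open>H\<close>.\<close>
  obtain m where m: "1 < m" "(1 - m) *\<^sub>R h + m *\<^sub>R z \<in> H"
    using convex_rel_interior_if[OF assms(1,2)] hull_inc[OF h] by fastforce
  have "0 \<le> (1 - m) * (a \<bullet> h)"
    using assms(3)[OF m(2)] assms(4) by (simp add: inner_add_right)
  then have "a \<bullet> h \<le> 0" using m(1) by (simp add: zero_le_mult_iff)
  then show "a \<bullet> h = 0" using assms(3)[OF h] by simp
qed

lemma mem_Int_if_mem_plus_perp_Int:
  assumes "v \<in> V" "v \<in> H + (perp H \<inter> perp V)"
  shows "v \<in> H \<inter> V"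
proof -
  obtain h w where "v = h + w" "h \<in> H" "w \<in> perp H \<inter> perp V" using assms(2) by (rule set_plus_elim)
  moreover have "w \<bullet> v = 0" "w \<bullet> h = 0" using calculation assms(1) unfolding perp_def by auto
  ultimately have "w = 0" by (simp add: inner_add_right)
  then show ?thesis using \<open>v = h + w\<close> \<open>h \<in> H\<close> assms(1) by simp
qed

lemma dual_cone_Int_subspace_separation:
  fixes H :: "'a::euclidean_space set"
  assumes "convex H" "cone H" "H \<noteq> {}" "subspace V" "\<And>y. y \<in> H \<inter> V \<Longrightarrow> 0 \<le> s \<bullet> y"
  obtains a c where "(a, c) \<noteq> 0"
    "\<And>v. v \<in> V \<Longrightarrow> a \<bullet> v + c * (s \<bullet> v) = 0"
    "\<And>h w t. h \<in> H \<Longrightarrow> w \<in> perp H \<inter> perp V \<Longrightarrow> t < 0 \<Longrightarrow> 0 \<le> a \<bullet> (h + w) + c * t"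
proof -
  let ?W = "perp H \<inter> perp V"
  text \<open>The graph of \<open>s\<close> over \<open>V\<close> misses the open half-cone below \<open>H + W\<close> in \<open>'a \<times> real\<close>.\<close>
  define S1 :: "('a \<times> real) set" where "S1 = (\<lambda>v. (v, s \<bullet> v)) ` V"
  define S2 :: "('a \<times> real) set" where "S2 = (H + ?W) \<times> {..<0}"
  have H0: "0 \<in> H" using assms(2,3) cone_contains_0 by blast
  have W: "subspace ?W" by (intro subspace_inter subspace_perp)
  have "linear (\<lambda>v. (v, s \<bullet> v))" by (simp add: linear_iff inner_add_right)
  then have "subspace S1" unfolding S1_def using assms(4) by (rule linear_subspace_image)
  have "convex S2"
    unfolding S2_def by (intro convex_Times convex_set_plus assms(1) subspace_imp_convex[OF W]) simp
  have rays2: "c *\<^sub>R x \<in> S2" if "x \<in> S2" "0 < c" for x c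
  proof -
    obtain h w t where "x = (h + w, t)" "h \<in> H" "w \<in> ?W" "t < 0"
      using \<open>x \<in> S2\<close> unfolding S2_def by (auto elim: set_plus_elim)
    moreover have "c *\<^sub>R h \<in> H" "c *\<^sub>R w \<in> ?W" "c * t < 0"
      using calculation \<open>0 < c\<close> mem_cone[OF assms(2)] subspace_scale[OF W]
      by (auto simp: mult_pos_neg)
    ultimately show ?thesis unfolding S2_def by (auto simp: scaleR_add_right)
  qed
  have "0 \<le> s \<bullet> v" if "v \<in> V" "v \<in> H + ?W" for v
    using assms(5) mem_Int_if_mem_plus_perp_Int[OF that] .
  then have "S1 \<inter> S2 = {}" unfolding S1_def S2_def by force
  moreover have "S1 \<noteq> {}" "S2 \<noteq> {}"
    using subspace_0[OF assms(4)] H0 subspace_0[OF W] unfolding S1_def S2_def by (auto intro!: exI[of _ "-1"])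
  ultimately obtain p b where p: "p \<noteq> 0" "\<And>x. x \<in> S1 \<Longrightarrow> p \<bullet> x \<le> b" "\<And>x. x \<in> S2 \<Longrightarrow> b \<le> p \<bullet> x"
    using separating_hyperplane_sets[OF subspace_imp_convex[OF \<open>subspace S1\<close>] \<open>convex S2\<close>] by metis
  obtain a c where ac: "p = (a, c)" by fastforce
  show ?thesis
  proof (rule that[of a c])
    show "(a, c) \<noteq> 0" using p(1) ac by simp
    show "a \<bullet> v + c * (s \<bullet> v) = 0" if "v \<in> V" for v
    proof -
      have "(- p) \<bullet> (v, s \<bullet> v) = 0"
        using inner_eq_0_if_bounded_below_on_subspace[OF \<open>subspace S1\<close>, of "- b" "- p"] p(2) that
        unfolding S1_def by fastforce
      then show ?thesis using ac by simp
    qed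
    show "0 \<le> a \<bullet> (h + w) + c * t" if "h \<in> H" "w \<in> ?W" "t < 0" for h w t
      using inner_nonneg_if_bounded_below_on_rays[OF rays2 p(3), of "(h + w, t)"] that ac
      unfolding S2_def by (simp add: set_plus_intro)
  qed
qed

lemma dual_cone_Int_subspace_decomposition:
  fixes H :: "'a::euclidean_space set"
  assumes "convex H" "cone H" "subspace V" "z \<in> rel_interior H" "z \<in> V"
    and "\<And>y. y \<in> H \<inter> V \<Longrightarrow> 0 \<le> s \<bullet> y"
  shows "s \<in> dual_cone H + perp V"
proof -
  let ?W = "perp H \<inter> perp V"
  have "z \<in> H" using assms(4) rel_interior_subset by blast
  then have H0: "0 \<in> H" using assms(2) cone_contains_0 by blast
  obtain a c where ac: "(a, c) \<noteq> 0"
    and onV: "\<And>v. v \<in> V \<Longrightarrow> a \<bullet> v + c * (s \<bullet> v) = 0"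
    and below: "\<And>h w t. h \<in> H \<Longrightarrow> w \<in> ?W \<Longrightarrow> t < 0 \<Longrightarrow> 0 \<le> a \<bullet> (h + w) + c * t"
    using dual_cone_Int_subspace_separation[OF assms(1,2) _ assms(3,6)] H0 by blast
  have W0: "0 \<in> ?W" by (simp add: perp_def)
  have "c \<le> 0" using below[OF H0 W0, of "-1"] by simp
  have aH: "0 \<le> a \<bullet> h" if "h \<in> H" for h
  proof (rule inner_nonneg_if_bounded_below_on_rays[OF _ _ that])
    show "\<And>x c. x \<in> H \<Longrightarrow> 0 < c \<Longrightarrow> c *\<^sub>R x \<in> H" using assms(2) mem_cone by fastforce
    show "c \<le> a \<bullet> x" if "x \<in> H" for x using below[OF that W0, of "-1"] by simp
  qed
  show ?thesis
  proof (cases "c = 0")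
    case True
    then have "a \<in> perp V" using onV unfolding perp_def by simp
    with aH have "a \<in> perp H"
      using perp_if_inner_nonneg_vanishing_at_rel_interior[OF assms(1,4)] assms(5)
      unfolding perp_def by blast
    with \<open>a \<in> perp V\<close> have "a \<bullet> a = 0"
    proof (intro inner_eq_0_if_bounded_below_on_subspace[of ?W c] IntI)
      show "subspace ?W" by (simp add: subspace_inter subspace_perp)
      show "c \<le> a \<bullet> x" if "x \<in> ?W" for x using below[OF H0 that, of "-1"] by simp
    qed
    then show ?thesis using ac True by (simp add: zero_prod_def)
  next
    case False
    with \<open>c \<le> 0\<close> have "c < 0" by simp
    define h where "h = (- 1 / c) *\<^sub>R a"
    have "h \<in> dual_cone H"
      unfolding dual_cone_def h_def using aH \<open>c < 0\<close>
      by (auto intro!: mult_nonneg_nonneg simp: divide_simps)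
    moreover have "s - h \<in> perp V"
      unfolding perp_def
    proof clarify
      fix v assume "v \<in> V"
      have "(s - h) \<bullet> v = (c * (s \<bullet> v) + a \<bullet> v) / c"
        using \<open>c < 0\<close> by (simp add: h_def inner_diff_left inner_add_left field_simps)
      then show "(s - h) \<bullet> v = 0" using onV[OF \<open>v \<in> V\<close>] by simp
    qed
    ultimately show ?thesis using set_plus_intro[of h _ "s - h"] by fastforce
  qed
qed

lemma exists_face_of_rel_interior_mem:
  fixes T :: "'a::euclidean_space set"
  assumes "convex T" "z \<in> T"
  obtains H where "H face_of T" "z \<in> rel_interior H"
proof -
  define H where "H = \<Inter>{F. F face_of T \<and> z \<in> F}"
  have H: "H face_of T" unfolding H_def
    by (rule face_of_Inter) (use assms face_of_refl in auto)
  have zH: "z \<in> H" unfolding H_def by blast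
  have minimal: "H \<subseteq> G" if "G face_of T" "z \<in> G" for G
    unfolding H_def using that by (intro Inter_lower) simp
  have "z \<in> rel_interior H"
  proof (rule ccontr)
    assume "z \<notin> rel_interior H"
    have cH: "convex H" using H face_of_imp_convex by blast
    obtain a where a: "\<And>y. y \<in> H \<Longrightarrow> a \<bullet> z \<le> a \<bullet> y" "\<And>y. y \<in> rel_interior H \<Longrightarrow> a \<bullet> z < a \<bullet> y"
      using supporting_hyperplane_rel_boundary[OF cH zH \<open>z \<notin> rel_interior H\<close>] by metis
    have "H \<inter> {y. a \<bullet> y = a \<bullet> z} face_of H"
      using face_of_Int_supporting_hyperplane_ge[OF cH a(1)] .
    then have "H \<subseteq> H \<inter> {y. a \<bullet> y = a \<bullet> z}"
      by (rule minimal[OF face_of_trans[OF _ H]]) (simp add: zH)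
    moreover obtain y where y: "y \<in> rel_interior H" using rel_interior_eq_empty[OF cH] zH by blast
    moreover have "y \<in> H" using y rel_interior_subset by blast
    ultimately have "a \<bullet> y = a \<bullet> z" by blast
    then show False using a(2)[OF y] by simp
  qed
  with H show ?thesis using that by blast
qed

definition feasible_directions :: "'a::real_vector \<Rightarrow> 'a set \<Rightarrow> 'a set" where
  "feasible_directions x C = {d. \<exists>\<epsilon>>0. x + \<epsilon> *\<^sub>R d \<in> C}"

lemma tangent_cone_eq_closure: "tangent_cone x C = closure (feasible_directions x C)"
  unfolding tangent_cone_def feasible_directions_def ..

lemma mem_tangent_cone_if_step:
  assumes "0 < \<epsilon>" "x + \<epsilon> *\<^sub>R d \<in> C"
  shows "d \<in> tangent_cone x C"
proof -
  have "d \<in> feasible_directions x C" unfolding feasible_directions_def using assms by blast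
  then show ?thesis unfolding tangent_cone_eq_closure using closure_subset by blast
qed

lemma convex_step_shrink:
  assumes "convex C" "x \<in> C" "x + \<epsilon> *\<^sub>R d \<in> C" "0 < \<delta>" "\<delta> \<le> \<epsilon>"
  shows "x + \<delta> *\<^sub>R d \<in> C"
proof -
  have "(1 - \<delta>/\<epsilon>) *\<^sub>R x + (\<delta>/\<epsilon>) *\<^sub>R (x + \<epsilon> *\<^sub>R d) \<in> C"
    using convexD[OF assms(1-3), of "1 - \<delta>/\<epsilon>" "\<delta>/\<epsilon>"] assms(4,5) by simp
  moreover have "(1 - \<delta>/\<epsilon>) *\<^sub>R x + (\<delta>/\<epsilon>) *\<^sub>R (x + \<epsilon> *\<^sub>R d) = x + \<delta> *\<^sub>R d"
    using assms(4,5) by (simp add: algebra_simps)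
  ultimately show ?thesis by simp
qed

lemma convex_feasible_directions:
  assumes "convex C" "x \<in> C"
  shows "convex (feasible_directions x C)"
  unfolding convex_def feasible_directions_def
proof clarify
  fix d1 d2 and u v \<epsilon>1 \<epsilon>2 :: real
  assume uv: "0 \<le> u" "0 \<le> v" "u + v = 1"
    and d1: "0 < \<epsilon>1" "x + \<epsilon>1 *\<^sub>R d1 \<in> C" and d2: "0 < \<epsilon>2" "x + \<epsilon>2 *\<^sub>R d2 \<in> C"
  define \<epsilon> where "\<epsilon> = min \<epsilon>1 \<epsilon>2"
  have "0 < \<epsilon>" using d1 d2 by (simp add: \<epsilon>_def)
  have "x + \<epsilon> *\<^sub>R d1 \<in> C" "x + \<epsilon> *\<^sub>R d2 \<in> C"
    using convex_step_shrink[OF assms d1(2) \<open>0 < \<epsilon>\<close>] convex_step_shrink[OF assms d2(2) \<open>0 < \<epsilon>\<close>]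
    by (simp_all add: \<epsilon>_def)
  then have "u *\<^sub>R (x + \<epsilon> *\<^sub>R d1) + v *\<^sub>R (x + \<epsilon> *\<^sub>R d2) \<in> C" using convexD[OF assms(1)] uv by simp
  moreover have "u *\<^sub>R (x + \<epsilon> *\<^sub>R d1) + v *\<^sub>R (x + \<epsilon> *\<^sub>R d2) = x + \<epsilon> *\<^sub>R (u *\<^sub>R d1 + v *\<^sub>R d2)"
    using uv(3) by (simp add: algebra_simps flip: scaleR_add_left)
  ultimately show "\<exists>\<epsilon>>0. x + \<epsilon> *\<^sub>R (u *\<^sub>R d1 + v *\<^sub>R d2) \<in> C" using \<open>0 < \<epsilon>\<close> by auto
qed

lemma cone_feasible_directions:
  assumes "x \<in> C"
  shows "cone (feasible_directions x C)"
  unfolding cone_def feasible_directions_def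
proof clarify
  fix d and c \<epsilon> :: real
  assume "0 \<le> c" "0 < \<epsilon>" "x + \<epsilon> *\<^sub>R d \<in> C"
  show "\<exists>\<epsilon>>0. x + \<epsilon> *\<^sub>R (c *\<^sub>R d) \<in> C"
  proof (cases "c = 0")
    case True
    then show ?thesis using assms by (auto intro: exI[of _ 1])
  next
    case False
    then have "0 < \<epsilon> / c" "x + (\<epsilon> / c) *\<^sub>R (c *\<^sub>R d) = x + \<epsilon> *\<^sub>R d"
      using \<open>0 \<le> c\<close> \<open>0 < \<epsilon>\<close> by auto
    then show ?thesis using \<open>x + \<epsilon> *\<^sub>R d \<in> C\<close> by metis
  qed
qed

lemma closed_tangent_cone: "closed (tangent_cone x C)"
  unfolding tangent_cone_eq_closure by simp

lemma convex_tangent_cone: "convex C \<Longrightarrow> x \<in> C \<Longrightarrow> convex (tangent_cone x C)"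
  unfolding tangent_cone_eq_closure by (intro convex_closure convex_feasible_directions)

lemma cone_tangent_cone: "x \<in> C \<Longrightarrow> cone (tangent_cone x C)"
  unfolding tangent_cone_eq_closure by (intro cone_closure cone_feasible_directions)

lemma zero_in_tangent_cone: "x \<in> C \<Longrightarrow> 0 \<in> tangent_cone x C"
  by (rule mem_tangent_cone_if_step[of 1]) auto

lemma convex_cone_subset_tangent_cone:
  assumes "convex K" "cone K" "x \<in> K"
  shows "K \<subseteq> tangent_cone x K"
proof
  fix d assume "d \<in> K"
  then have "x + 1 *\<^sub>R d \<in> K" using convex_cone_add[OF assms(1,2) assms(3)] by simp
  then show "d \<in> tangent_cone x K" by (rule mem_tangent_cone_if_step[rotated]) simp
qed

lemma uminus_in_tangent_cone:
  assumes "cone K" "x \<in> K"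
  shows "-x \<in> tangent_cone x K"
proof -
  have "x + (1/2) *\<^sub>R (-x) = (1 - 1/2) *\<^sub>R x" by (simp only: scaleR_diff_left) simp
  then have "x + (1/2) *\<^sub>R (-x) \<in> K" using mem_cone[OF assms, of "1/2"] by simp
  then show ?thesis by (rule mem_tangent_cone_if_step[rotated]) simp
qed

lemma dual_cone_tangent_cone:
  assumes "s \<in> dual_cone F" "s \<bullet> x = 0"
  shows "s \<in> dual_cone (tangent_cone x F)"
proof -
  have "feasible_directions x F \<subseteq> {d. 0 \<le> s \<bullet> d}"
  proof
    fix d assume "d \<in> feasible_directions x F"
    then obtain \<epsilon> where "0 < \<epsilon>" "x + \<epsilon> *\<^sub>R d \<in> F" unfolding feasible_directions_def by blast
    then have "0 \<le> \<epsilon> * (s \<bullet> d)" using assms unfolding dual_cone_def by (force simp: inner_add_right)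
    then show "d \<in> {d. 0 \<le> s \<bullet> d}" using \<open>0 < \<epsilon>\<close> by (simp add: zero_le_mult_iff)
  qed
  then have "tangent_cone x F \<subseteq> {d. 0 \<le> s \<bullet> d}"
    unfolding tangent_cone_eq_closure using closed_halfspace_ge[of 0 s] by (intro closure_minimal) simp
  then show ?thesis unfolding dual_cone_def by blast
qed

lemma strongly_tangentially_exposed_tangent_cone:
  assumes "strongly_tangentially_exposed K" "x \<in> K"
  shows "strongly_tangentially_exposed (tangent_cone x K)"
proof -
  let ?T = "tangent_cone x K"
  have T: "{?T} \<subseteq> tangent_family {K}" unfolding tangent_family_def using assms(2) by blast
  have mono: "(tangent_family ^^ k) A \<subseteq> (tangent_family ^^ k) B" if "A \<subseteq> B" for A B k
    using that by (induction k) (auto simp: tangent_family_def)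
  have "?T \<in> lex_tangent_cones K" unfolding lex_tangent_cones_def
    using T by (intro UN_I[of 1]) auto
  moreover have "lex_tangent_cones ?T \<subseteq> lex_tangent_cones K"
  proof
    fix D assume "D \<in> lex_tangent_cones ?T"
    then obtain k where "D \<in> (tangent_family ^^ k) {?T}" unfolding lex_tangent_cones_def by auto
    then have "D \<in> (tangent_family ^^ Suc k) {K}"
      using mono[OF T] by (auto simp only: funpow_Suc_right comp_apply)
    then show "D \<in> lex_tangent_cones K" unfolding lex_tangent_cones_def by (intro UN_I[of "Suc k"]) auto
  qed
  ultimately show ?thesis using assms(1) unfolding strongly_tangentially_exposed_def by blast
qed

definition lineality_space :: "'a::real_vector set \<Rightarrow> 'a set" where
  "lineality_space K = {x. x \<in> K \<and> -x \<in> K}"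

lemma subspace_lineality_space:
  assumes "convex K" "cone K" "K \<noteq> {}"
  shows "subspace (lineality_space K)"
  unfolding subspace_def lineality_space_def
proof (intro conjI ballI allI)
  show "0 \<in> {x. x \<in> K \<and> - x \<in> K}" using assms cone_contains_0 by auto
next
  fix x y assume "x \<in> {x. x \<in> K \<and> - x \<in> K}" "y \<in> {x. x \<in> K \<and> - x \<in> K}"
  then show "x + y \<in> {x. x \<in> K \<and> - x \<in> K}"
    using convex_cone_add[OF assms(1,2), of x y] convex_cone_add[OF assms(1,2), of "-x" "-y"] by auto
next
  fix c :: real and x assume x: "x \<in> {x. x \<in> K \<and> - x \<in> K}"
  consider "0 \<le> c" | "0 \<le> -c" by linarith
  then show "c *\<^sub>R x \<in> {x. x \<in> K \<and> - x \<in> K}"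
  proof cases
    case 1
    then show ?thesis using x mem_cone[OF assms(2), of x c] mem_cone[OF assms(2), of "-x" c] by simp
  next
    case 2
    then show ?thesis using x mem_cone[OF assms(2), of x "-c"] mem_cone[OF assms(2), of "-x" "-c"] by simp
  qed
qed

lemma dim_lineality_space_less_tangent_cone:
  fixes K :: "'a::euclidean_space set"
  assumes "convex K" "cone K" "a \<in> K" "-a \<notin> K"
  shows "dim (lineality_space K) < dim (lineality_space (tangent_cone a K))"
proof -
  let ?T = "tangent_cone a K"
  have "K \<subseteq> ?T" using convex_cone_subset_tangent_cone[OF assms(1-3)] .
  then have "lineality_space K \<subset> lineality_space ?T"
    using assms(3,4) uminus_in_tangent_cone[OF assms(2,3)] unfolding lineality_space_def by blast
  moreover have "span (lineality_space K) = lineality_space K"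
    using subspace_lineality_space[OF assms(1,2)] assms(3) span_eq_iff by blast
  moreover have "span (lineality_space ?T) = lineality_space ?T"
    using subspace_lineality_space[OF convex_tangent_cone[OF assms(1,3)] cone_tangent_cone[OF assms(3)]]
      zero_in_tangent_cone[OF assms(3)] span_eq_iff by blast
  ultimately show ?thesis using dim_psubset by metis
qed

lemma exposing_direction_of_dual_face:
  fixes K :: "'a::euclidean_space set"
  assumes "cone K" "F face_of K" "closed F" "F \<noteq> {}"
    and "s \<in> dual_cone F" "s \<notin> rel_interior (dual_cone F)"
  obtains a where "a \<in> F" "s \<bullet> a = 0" "-a \<notin> K"
proof -
  obtain a where a: "\<And>y. y \<in> dual_cone F \<Longrightarrow> a \<bullet> s \<le> a \<bullet> y"
      "\<And>y. y \<in> rel_interior (dual_cone F) \<Longrightarrow> a \<bullet> s < a \<bullet> y"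
    using supporting_hyperplane_rel_boundary[OF convex_dual_cone assms(5,6)] by metis
  have "0 \<in> dual_cone F" "2 *\<^sub>R s \<in> dual_cone F" using assms(5) by (auto simp: dual_cone_def)
  then have "a \<bullet> s = 0" using a(1)[of 0] a(1)[of "2 *\<^sub>R s"] by simp
  have "cone F" using face_of_cone_imp_cone[OF assms(1,2,4)] .
  have "a \<in> F"
  proof (rule mem_closed_convex_cone_if_dual_nonneg[OF assms(3) face_of_imp_convex[OF assms(2)] \<open>cone F\<close> assms(4)])
    show "0 \<le> b \<bullet> a" if "b \<in> dual_cone F" for b
      using a(1)[OF that] \<open>a \<bullet> s = 0\<close> by (simp add: inner_commute)
  qed
  moreover have "-a \<notin> K"
  proof
    assume "-a \<in> K"
    then have "-a \<in> F"
      using face_of_cone_contains_lines[OF assms(1,2,4)] \<open>a \<in> F\<close> face_of_imp_subset[OF assms(2)] by auto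
    obtain y where "y \<in> rel_interior (dual_cone F)"
      using rel_interior_eq_empty[OF convex_dual_cone] \<open>0 \<in> dual_cone F\<close> by blast
    then have "0 < a \<bullet> y" "0 \<le> y \<bullet> (-a)"
      using a(2) \<open>a \<bullet> s = 0\<close> \<open>-a \<in> F\<close> rel_interior_subset unfolding dual_cone_def by fastforce+
    then show False by (simp add: inner_commute)
  qed
  ultimately show ?thesis using that \<open>a \<bullet> s = 0\<close> by (simp add: inner_commute)
qed

lemma face_of_tangent_cone_decomposition:
  fixes K :: "'a::euclidean_space set"
  assumes "convex K" "cone K" "F face_of K" "F \<noteq> {}" "a \<in> F"
    and "s \<in> dual_cone F" "s \<bullet> a = 0"
    and exposed: "tangent_cone a K \<inter> span F = tangent_cone a F"
  obtains H where "H face_of tangent_cone a K" "F \<subseteq> H" "s \<in> dual_cone H + perp F"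
proof -
  let ?T = "tangent_cone a K" and ?F' = "tangent_cone a F"
  have cF: "convex F" "cone F"
    using face_of_imp_convex[OF assms(3)] face_of_cone_imp_cone[OF assms(2-4)] by auto
  have aK: "a \<in> K" using assms(3,5) face_of_imp_subset by blast
  obtain z where z: "z \<in> rel_interior ?F'"
    using rel_interior_eq_empty[OF convex_tangent_cone[OF cF(1) assms(5)]] zero_in_tangent_cone[OF assms(5)]
    by blast
  then have zF': "z \<in> ?F'" using rel_interior_subset by blast
  obtain H where H: "H face_of ?T" "z \<in> rel_interior H"
    using exists_face_of_rel_interior_mem[OF convex_tangent_cone[OF assms(1) aK]] zF' exposed by blast
  have "?F' \<subseteq> H"
    using subset_of_face_of[OF H(1)] z exposed rel_interior_subset H(2) by blast
  then have HF: "H \<inter> span F = ?F'" using exposed face_of_imp_subset[OF H(1)] by blast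
  have "H \<noteq> {}" using H(2) rel_interior_subset by blast
  then have cH: "convex H" "cone H"
    using face_of_imp_convex[OF H(1)] face_of_cone_imp_cone[OF cone_tangent_cone[OF aK] H(1)] by auto
  have "s \<in> dual_cone ?F'" using dual_cone_tangent_cone[OF assms(6,7)] .
  have "s \<in> dual_cone H + perp (span F)"
  proof (rule dual_cone_Int_subspace_decomposition[OF cH subspace_span H(2)])
    show "z \<in> span F" using zF' exposed by blast
    show "0 \<le> s \<bullet> y" if "y \<in> H \<inter> span F" for y
      using \<open>s \<in> dual_cone ?F'\<close> that HF unfolding dual_cone_def by (auto simp: inner_commute)
  qed
  moreover have "F \<subseteq> H"
    using \<open>?F' \<subseteq> H\<close> convex_cone_subset_tangent_cone[OF cF assms(5)] by blast
  ultimately show ?thesis using that H(1) by (simp add: perp_span)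
qed

lemma dual_cone_face_subset_if_tangent_cones:
  fixes K :: "'a::euclidean_space set"
  assumes "closed K" "convex K" "cone K" "tangentially_exposed K"
    and F: "F face_of K" "closed F" "F \<noteq> {}" "F \<noteq> K"
    and IH: "\<And>a H. a \<in> K \<Longrightarrow> -a \<notin> K \<Longrightarrow> H face_of tangent_cone a K \<Longrightarrow> H \<noteq> {} \<Longrightarrow>
      H \<noteq> tangent_cone a K \<Longrightarrow> dual_cone H \<subseteq> dual_cone (tangent_cone a K) + perp H"
  shows "dual_cone F \<subseteq> dual_cone K + perp F"
proof
  fix s assume s: "s \<in> dual_cone F"
  show "s \<in> dual_cone K + perp F"
  proof (cases "s \<in> rel_interior (dual_cone F)")
    case True
    then show ?thesis using rel_interior_dual_cone_face_subset assms(1-3) F by blast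
  next
    case False
    obtain a where a: "a \<in> F" "s \<bullet> a = 0" "-a \<notin> K"
      using exposing_direction_of_dual_face[OF assms(3) F(1-3) s False] by blast
    let ?T = "tangent_cone a K"
    have aK: "a \<in> K" using a(1) F(1) face_of_imp_subset by blast
    have "?T \<inter> span F = tangent_cone a F"
      using assms(4) F a(1) unfolding tangentially_exposed_def is_face_iff_closed_face_of by blast
    then obtain H where H: "H face_of ?T" "F \<subseteq> H" "s \<in> dual_cone H + perp F"
      using face_of_tangent_cone_decomposition[OF assms(2,3) F(1,3) a(1) s a(2)] by blast
    have TK: "dual_cone ?T \<subseteq> dual_cone K"
      using dual_cone_antimono[OF convex_cone_subset_tangent_cone[OF assms(2,3) aK]] .
    show ?thesis
    proof (cases "H = ?T")
      case True
      then show ?thesis using H(3) TK set_plus_mono2 by blast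
    next
      case False
      then have "dual_cone H \<subseteq> dual_cone ?T + perp H" using IH[OF aK a(3) H(1)] H(2) F(3) by blast
      then have "dual_cone H \<subseteq> dual_cone K + perp H" using set_plus_mono2[OF TK order_refl] by blast
      then have "dual_cone H + perp F \<subseteq> dual_cone K + perp H + perp F" by (rule set_plus_mono2) simp
      also have "\<dots> = dual_cone K + perp F"
        using set_plus_absorb_subspace[OF subspace_perp _ perp_antimono[OF H(2)]]
        by (simp add: add.assoc perp_def)
      finally show ?thesis using H(3) by blast
    qed
  qed
qed

lemma dual_cone_face_subset_dual_cone_plus_perp:
  fixes K :: "'a::euclidean_space set"
  assumes "closed K" "convex K" "cone K" "strongly_tangentially_exposed K"
    and "F face_of K" "closed F" "F \<noteq> {}" "F \<noteq> K"
  shows "dual_cone F \<subseteq> dual_cone K + perp F"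
  using assms
proof (induction "DIM('a) - dim (lineality_space K)" arbitrary: K F rule: less_induct)
  case less
  have "tangentially_exposed K" using less.prems(4) unfolding strongly_tangentially_exposed_def by blast
  then show ?case
  proof (rule dual_cone_face_subset_if_tangent_cones[OF less.prems(1-3) _ less.prems(5-8)])
    fix a H
    assume aK: "a \<in> K" "-a \<notin> K"
      and H: "H face_of tangent_cone a K" "H \<noteq> {}" "H \<noteq> tangent_cone a K"
    let ?T = "tangent_cone a K"
    have "dim (lineality_space K) < dim (lineality_space ?T)"
      using dim_lineality_space_less_tangent_cone[OF less.prems(2,3) aK] .
    then have "DIM('a) - dim (lineality_space ?T) < DIM('a) - dim (lineality_space K)"
      using dim_subset_UNIV[of "lineality_space ?T"] by linarith
    moreover have T: "closed ?T" "convex ?T" "cone ?T"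
      using closed_tangent_cone convex_tangent_cone[OF less.prems(2) aK(1)] cone_tangent_cone[OF aK(1)] .
    moreover have "strongly_tangentially_exposed ?T"
      using strongly_tangentially_exposed_tangent_cone[OF less.prems(4) aK(1)] .
    moreover have "closed H" using face_of_imp_closed[OF T(2,1) H(1)] .
    ultimately show "dual_cone H \<subseteq> dual_cone ?T + perp H" using less.hyps H by blast
  qed
qed

theorem theorem3p3:
  fixes K :: "'a::euclidean_space set"
  assumes "closed K" and "convex K" and "cone K" and "K \<noteq> {}"
    and "strongly_tangentially_exposed K"
  shows "facially_dual_complete K"
  unfolding facially_dual_complete_def
proof (intro allI impI)
  fix F assume F: "is_face F K \<and> F \<noteq> {} \<and> F \<noteq> K"
  then have "F face_of K" "closed F" by (simp_all add: is_face_iff_closed_face_of)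
  have "{s + t | s t. s \<in> dual_cone K \<and> t \<in> perp F} = dual_cone K + perp F"
    unfolding set_plus_def by blast
  also have "\<dots> = dual_cone F"
    using dual_cone_face_subset_dual_cone_plus_perp[OF assms(1-3,5) \<open>F face_of K\<close> \<open>closed F\<close>] F
      dual_cone_plus_perp_subset face_of_imp_subset[OF \<open>F face_of K\<close>] by blast
  finally show "closed {s + t | s t. s \<in> dual_cone K \<and> t \<in> perp F}"
    using closed_dual_cone by simp
qed

end
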